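(* Let $\Sigma$ be a set of real $n\times n$ matrices and let $\|\cdot\|$ be a polyhedral seminorm on $\mathbb{R}^n$ that is nonincreasing for $\Sigma$. Let $\mathcal{B}=\{x\in\mathbb{R}^n:\|x\|\le 1\}$. If there is a left-infinite product $\dots A_{\sigma(2)}A_{\sigma(1)}$ of matrices from $\Sigma$ that does not contract $\|\cdot\|$, then there is a left-infinite product of matrices from $\Sigma$ that does not contract $\|\cdot\|$ and that is periodic with a period $p$ satisfying $p\le p^*=W(\mathcal{B})$.
   Context: A seminorm is polyhedral if its unit ball is a polyhedron (a set defined by finitely many linear inequalities). A seminorm $\|\cdot\|$ is nonincreasing for a matrix $A$ if $\|Ax\|\le\|x\|$ for all $x$, and nonincreasing for a set $\Sigma$ if it is so for every matrix of $\Sigma$. Given a sequence $\sigma$ of indices, the left-infinite product $\dots A_{\sigma(2)}A_{\sigma(1)}$ contracts $\|\cdot\|$ if there is $t$ with $A_{\sigma(t)}\cdots A_{\sigma(1)}\mathcal{B}\subset \mathrm{int}(\mathcal{B})$ (interior in $\mathbb{R}^n$); it is periodic with period $p$ if $\sigma(i+p)=\sigma(i)$ for all $i$. Faces: for a polyhedron $\mathcal{Q}$, a face is $\mathcal{Q}$, $\varnothing$, or a set $\mathcal{Q}\cap\{x:b^\top x=c\}$ that is nonempty, where $b^\top x\le c$ for all $x\in\mathcal{Q}$; its dimension is $d$ if its affine hull has dimension $d$. A proper face is a face other than $\mathcal{Q}$ and $\varnothing$. For a centrally symmetric polyhedron $\mathcal{Q}=-\mathcal{Q}$, a double-face is a set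 $F\cup -F$ with $F$ a proper face (its rank is the dimension of $F$). The lattice of double-faces of $\mathcal{Q}$ is the set consisting of all double-faces of $\mathcal{Q}$ together with $\mathcal{Q}$ and $\varnothing$, partially ordered by inclusion. An antichain is a set of pairwise incomparable elements, and $W(\mathcal{Q})$, the width, is the maximum number of elements of an antichain in the lattice of double-faces of $\mathcal{Q}$. (The unit ball $\mathcal{B}$ of a seminorm is centrally symmetric.) *)

theory Defs
  imports "HOL-Analysis.Analysis"
begin

definition is_seminorm :: "(real^'n \<Rightarrow> real) \<Rightarrow> bool" where
  "is_seminorm N \<longleftrightarrow>
     (\<forall>x y. N (x + y) \<le> N x + N y) \<and> (\<forall>c x. N (c *\<^sub>R x) = \<bar>c\<bar> * N x)"

definition unit_ball :: "(real^'n \<Rightarrow> real) \<Rightarrow> (real^'n) set" where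
  "unit_ball N = {x. N x \<le> 1}"

definition polyhedral_seminorm :: "(real^'n \<Rightarrow> real) \<Rightarrow> bool" where
  "polyhedral_seminorm N \<longleftrightarrow> is_seminorm N \<and> polyhedron (unit_ball N)"

definition nonincreasing_for :: "(real^'n \<Rightarrow> real) \<Rightarrow> (real^'n^'n) set \<Rightarrow> bool" where
  "nonincreasing_for N \<Sigma> \<longleftrightarrow> (\<forall>A\<in>\<Sigma>. \<forall>x. N (A *v x) \<le> N x)"

text \<open>Partial products of a left-infinite product: lprod M t = M (t-1) ** ... ** M 0.
  (The paper's A_sigma(i) corresponds to M (i - 1).)\<close>
fun lprod :: "(nat \<Rightarrow> real^'n^'n) \<Rightarrow> nat \<Rightarrow> real^'n^'n" where
  "lprod M 0 = mat 1"
| "lprod M (Suc t) = M t ** lprod M t"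

definition contracts :: "(nat \<Rightarrow> real^'n^'n) \<Rightarrow> (real^'n \<Rightarrow> real) \<Rightarrow> bool" where
  "contracts M N \<longleftrightarrow>
     (\<exists>t\<ge>1. (\<lambda>x. lprod M t *v x) ` unit_ball N \<subseteq> interior (unit_ball N))"

definition periodic_with :: "(nat \<Rightarrow> 'a) \<Rightarrow> nat \<Rightarrow> bool" where
  "periodic_with M p \<longleftrightarrow> (\<forall>i. M (i + p) = M i)"

definition poly_face :: "(real^'n) set \<Rightarrow> (real^'n) set \<Rightarrow> bool" where
  "poly_face Q F \<longleftrightarrow> F = Q \<or> F = {} \<or>
     (\<exists>b c. (\<forall>x\<in>Q. b \<bullet> x \<le> c) \<and> F = Q \<inter> {x. b \<bullet> x = c} \<and> F \<noteq> {})"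

definition proper_face :: "(real^'n) set \<Rightarrow> (real^'n) set \<Rightarrow> bool" where
  "proper_face Q F \<longleftrightarrow> poly_face Q F \<and> F \<noteq> Q \<and> F \<noteq> {}"

definition double_faces :: "(real^'n) set \<Rightarrow> (real^'n) set set" where
  "double_faces Q = {F \<union> uminus ` F | F. proper_face Q F}"

definition double_face_lattice :: "(real^'n) set \<Rightarrow> (real^'n) set set" where
  "double_face_lattice Q = double_faces Q \<union> {Q, {}}"

definition antichain_sets :: "'a set set \<Rightarrow> bool" where
  "antichain_sets A \<longleftrightarrow> (\<forall>X\<in>A. \<forall>Y\<in>A. X \<noteq> Y \<longrightarrow> \<not> X \<subseteq> Y)"

text \<open>Width: maximum size of an antichain (the lattice is finite for polyhedra).\<close>
definition width :: "(real^'n) set \<Rightarrow> nat" where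
  "width Q = Max {card A | A. A \<subseteq> double_face_lattice Q \<and> finite A \<and> antichain_sets A}"

end

theory Submission
  imports Defs
begin

text \<open>Write the unit ball as a finite system of inequalities a \<bullet> x \<le> b, and for y on the
  unit sphere let F y be the face on which all inequalities active at y are tight. If A is
  nonincreasing and A y is still on the sphere, then A maps F y into F (A y): for z in F y,
  y lies strictly between z and a point w of the ball, so A y lies strictly between A z and
  A w, and an inequality tight at A y must be tight at A z as well.
  A noncontracting product keeps some x on the sphere along its whole orbit, so the
  double faces F \<union> -F along the orbit form a walk in a finite set, which closes a cycle.
  If the cycle visits a double face contained in another one visited, it can be
  shortcut; after finitely many shortcuts the visited double faces form an antichain, so
  the cycle length is at most the width. Repeating the matrices of the cycle
  periodically keeps every point of its first double face on the sphere, so that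
  periodic product does not contract.\<close>

lemma seminorm_0: "is_seminorm N \<Longrightarrow> N 0 = 0"
  unfolding is_seminorm_def by (metis abs_zero mult_zero_left scaleR_zero_left)

lemma seminorm_minus: "is_seminorm N \<Longrightarrow> N (- x) = N x"
  unfolding is_seminorm_def by (metis abs_minus_cancel abs_one mult_1 scaleR_minus1_left)

lemma seminorm_scaleR: "is_seminorm N \<Longrightarrow> N (c *\<^sub>R x) = \<bar>c\<bar> * N x"
  unfolding is_seminorm_def by blast

lemma seminorm_nonneg:
  assumes "is_seminorm N"
  shows "N x \<ge> 0"
proof -
  have "N (x + - x) \<le> N x + N (- x)" using assms unfolding is_seminorm_def by blast
  then show ?thesis using seminorm_0[OF assms] seminorm_minus[OF assms, of x] by simp
qed

lemma seminorm_convex_on: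
  assumes "is_seminorm N"
  shows "convex_on UNIV N"
  unfolding convex_on_def
proof (intro conjI convex_UNIV ballI allI impI)
  fix u v :: real and x y assume "0 \<le> u" "0 \<le> v"
  have "N (u *\<^sub>R x + v *\<^sub>R y) \<le> N (u *\<^sub>R x) + N (v *\<^sub>R y)"
    using assms unfolding is_seminorm_def by blast
  also have "\<dots> = u * N x + v * N y" using seminorm_scaleR[OF assms] \<open>0 \<le> u\<close> \<open>0 \<le> v\<close> by simp
  finally show "N (u *\<^sub>R x + v *\<^sub>R y) \<le> u * N x + v * N y" .
qed

lemma seminorm_continuous_on: "is_seminorm N \<Longrightarrow> continuous_on UNIV N"
  by (rule convex_on_continuous) (auto intro: seminorm_convex_on)

lemma interior_unit_ball:
  assumes N: "is_seminorm N"
  shows "interior (unit_ball N) = {x. N x < 1}"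
proof
  have "open {x. N x < 1}"
    by (rule open_Collect_less[OF seminorm_continuous_on[OF N] continuous_on_const])
  then show "{x. N x < 1} \<subseteq> interior (unit_ball N)"
    by (intro interior_maximal) (auto simp: unit_ball_def)
next
  show "interior (unit_ball N) \<subseteq> {x. N x < 1}"
  proof
    fix x assume "x \<in> interior (unit_ball N)"
    then obtain e where e: "e > 0" "ball x e \<subseteq> unit_ball N" by (meson mem_interior)
    show "x \<in> {x. N x < 1}"
    proof (cases "x = 0")
      case True then show ?thesis using seminorm_0[OF N] by simp
    next
      case False
      define d where "d = e / (2 * norm x)"
      have d: "d > 0" using e False by (simp add: d_def)
      have "dist x ((1 + d) *\<^sub>R x) = e / 2"
        using e False by (simp add: dist_norm algebra_simps d_def)
      then have "(1 + d) *\<^sub>R x \<in> ball x e" using e by simp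
      then have "N ((1 + d) *\<^sub>R x) \<le> 1" using e by (auto simp: unit_ball_def)
      then have "(1 + d) * N x \<le> 1" using seminorm_scaleR[OF N] d by simp
      show ?thesis
      proof (rule ccontr)
        assume "x \<notin> {x. N x < 1}"
        then have "(1 + d) * 1 \<le> (1 + d) * N x" using d by (intro mult_left_mono) auto
        then have "1 + d \<le> (1 + d) * N x" by simp
        then show False using \<open>(1 + d) * N x \<le> 1\<close> d by linarith
      qed
    qed
  qed
qed

lemma polyhedron_finite_halfspaces:
  fixes S :: "'a::euclidean_space set"
  assumes "polyhedron S"
  obtains C where "finite C" "S = {x. \<forall>p\<in>C. fst p \<bullet> x \<le> snd p}"
proof -
  obtain F where F: "finite F" "S = \<Inter>F" "\<forall>h\<in>F. \<exists>a b. a \<noteq> 0 \<and> h = {x. a \<bullet> x \<le> b}"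
    using assms unfolding polyhedron_def by blast
  then have "\<forall>h\<in>F. \<exists>p. h = {x. fst p \<bullet> x \<le> snd p}" by fastforce
  then obtain f where f: "\<forall>h\<in>F. h = {x. fst (f h) \<bullet> x \<le> snd (f h)}" by metis
  have "x \<in> h \<longleftrightarrow> fst (f h) \<bullet> x \<le> snd (f h)" if "h \<in> F" for h x
    using f that by blast
  then have "S = {x. \<forall>p\<in>f ` F. fst p \<bullet> x \<le> snd p}"
    unfolding F(2) by auto
  then show ?thesis using F(1) that[of "f ` F"] by blast
qed

lemma halfspaces_small_step:
  fixes C :: "('a::real_inner \<times> real) set"
  assumes "finite C" and "\<forall>p\<in>C. fst p \<bullet> y \<le> snd p"
    and "\<forall>p\<in>C. fst p \<bullet> y = snd p \<longrightarrow> fst p \<bullet> v \<le> 0"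
  obtains e where "e > 0" "\<forall>p\<in>C. fst p \<bullet> (y + e *\<^sub>R v) \<le> snd p"
proof -
  have "eventually (\<lambda>e::real. fst p \<bullet> (y + e *\<^sub>R v) \<le> snd p) (at_right 0)" if p: "p \<in> C" for p
  proof (cases "fst p \<bullet> y = snd p")
    case True
    then have "fst p \<bullet> v \<le> 0" using assms(3) p by blast
    with True show ?thesis
      by (intro eventually_mono[OF eventually_at_right_less[of "0::real"]])
         (simp add: inner_add_right mult_nonneg_nonpos)
  next
    case False
    then have "fst p \<bullet> y < snd p" using assms(2) p by force
    moreover have "((\<lambda>e::real. fst p \<bullet> y + e * (fst p \<bullet> v)) \<longlongrightarrow> fst p \<bullet> y + 0 * (fst p \<bullet> v))
        (at_right 0)"
      by (intro tendsto_intros)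
    ultimately have "eventually (\<lambda>e::real. fst p \<bullet> y + e * (fst p \<bullet> v) < snd p) (at_right 0)"
      by (intro order_tendstoD(2)) auto
    then show ?thesis by eventually_elim (simp add: inner_add_right)
  qed
  then have "eventually (\<lambda>e::real. \<forall>p\<in>C. fst p \<bullet> (y + e *\<^sub>R v) \<le> snd p) (at_right 0)"
    using assms(1) by (intro eventually_ball_finite) auto
  then have "eventually (\<lambda>e::real. e > 0 \<and> (\<forall>p\<in>C. fst p \<bullet> (y + e *\<^sub>R v) \<le> snd p)) (at_right 0)"
    using eventually_at_right_less[of "0::real"] by eventually_elim auto
  then show ?thesis using eventually_happens'[OF trivial_limit_at_right_real] that by blast
qed

lemma matrix_vector_mult_uminus: "(A::real^'n^'m) *v (- x) = - (A *v x)"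
  by (metis matrix_vector_mult_scaleR scaleR_minus1_left)

locale seminorm_halfspaces =
  fixes N :: "real^'n \<Rightarrow> real" and C :: "((real^'n) \<times> real) set"
  assumes seminorm: "is_seminorm N" and finite_C: "finite C"
    and le_1_iff: "N x \<le> 1 \<longleftrightarrow> (\<forall>p\<in>C. fst p \<bullet> x \<le> snd p)"
begin

lemma polyhedron_unit_ball: "polyhedron (unit_ball N)"
proof -
  have "unit_ball N = (\<Inter>p\<in>C. {x. fst p \<bullet> x \<le> snd p})"
    using le_1_iff by (auto simp: unit_ball_def)
  then show ?thesis using finite_C by (auto intro: polyhedron_halfspace_le)
qed

definition active_face :: "real^'n \<Rightarrow> (real^'n) set" where
  "active_face y = {x. N x \<le> 1 \<and> (\<forall>p\<in>C. fst p \<bullet> y = snd p \<longrightarrow> fst p \<bullet> x = snd p)}"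

lemma in_active_face_self: "N y \<le> 1 \<Longrightarrow> y \<in> active_face y"
  by (simp add: active_face_def)

lemma active_constraint_pos:
  assumes "N y = 1"
  obtains p where "p \<in> C" "fst p \<bullet> y = snd p" "snd p > 0"
proof (rule ccontr)
  assume "\<not> thesis"
  then have "\<forall>p\<in>C. fst p \<bullet> y = snd p \<longrightarrow> fst p \<bullet> y \<le> 0" using that by force
  moreover have "\<forall>p\<in>C. fst p \<bullet> y \<le> snd p" using le_1_iff[of y] assms by simp
  ultimately obtain e where e: "e > 0" "\<forall>p\<in>C. fst p \<bullet> (y + e *\<^sub>R y) \<le> snd p"
    using halfspaces_small_step[OF finite_C] by blast
  then have "N ((1 + e) *\<^sub>R y) \<le> 1" using le_1_iff by (simp add: algebra_simps)
  then show False using seminorm_scaleR[OF seminorm] assms e by simp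
qed

lemma active_face_on_sphere:
  assumes y: "N y = 1" and z: "z \<in> active_face y"
  shows "N z = 1"
proof (rule ccontr)
  assume "N z \<noteq> 1"
  obtain p where p: "p \<in> C" "fst p \<bullet> y = snd p" "snd p > 0"
    using active_constraint_pos[OF y] .
  have z1: "N z < 1" and pz: "fst p \<bullet> z = snd p"
    using z \<open>N z \<noteq> 1\<close> p unfolding active_face_def by auto
  have z0: "N z \<ge> 0" by (rule seminorm_nonneg[OF seminorm])
  define s where "s = 2 / (1 + N z)"
  have s1: "s > 1" using z1 z0 by (simp add: s_def field_simps)
  have "N (s *\<^sub>R z) = s * N z" using seminorm_scaleR[OF seminorm] s1 by simp
  also have "\<dots> < 1" using z1 z0 by (simp add: s_def field_simps)
  finally have "fst p \<bullet> (s *\<^sub>R z) \<le> snd p" using le_1_iff p(1) by fastforce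
  then show False using pz s1 p(3) by simp
qed

lemma proper_face_active_face:
  assumes y: "N y = 1"
  shows "proper_face (unit_ball N) (active_face y)"
proof -
  define I where "I = {p\<in>C. fst p \<bullet> y = snd p}"
  have "finite I" using finite_C unfolding I_def by simp
  define b where "b = (\<Sum>p\<in>I. fst p)"
  define c where "c = (\<Sum>p\<in>I. snd p)"
  have b: "b \<bullet> x = (\<Sum>p\<in>I. fst p \<bullet> x)" for x unfolding b_def by (simp add: inner_sum_left)
  have I_le: "\<forall>p\<in>I. fst p \<bullet> x \<le> snd p" if "x \<in> unit_ball N" for x
    using le_1_iff[of x] that unfolding unit_ball_def I_def by auto
  have supporting: "\<forall>x\<in>unit_ball N. b \<bullet> x \<le> c"
    unfolding b c_def using I_le by (auto intro: sum_mono)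
  \<comment> \<open>summing the active inequalities gives a single supporting hyperplane, with equality
    exactly when every active inequality is tight\<close>
  have "active_face y = unit_ball N \<inter> {x. b \<bullet> x = c}"
  proof (intro set_eqI iffI)
    fix x assume x: "x \<in> active_face y"
    then have "\<forall>p\<in>I. fst p \<bullet> x = snd p" unfolding active_face_def I_def by auto
    then have "b \<bullet> x = c" unfolding b c_def by (metis (mono_tags, lifting) sum.cong)
    then show "x \<in> unit_ball N \<inter> {x. b \<bullet> x = c}" using x unfolding active_face_def unit_ball_def by auto
  next
    fix x assume x: "x \<in> unit_ball N \<inter> {x. b \<bullet> x = c}"
    have "\<forall>p\<in>I. fst p \<bullet> x = snd p"
    proof (rule ccontr)
      assume "\<not> (\<forall>p\<in>I. fst p \<bullet> x = snd p)"
      then obtain q where q: "q \<in> I" "fst q \<bullet> x < snd q" using I_le x by force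
      have "(\<Sum>p\<in>I. fst p \<bullet> x) < (\<Sum>p\<in>I. snd p)"
        by (rule sum_strict_mono_ex1[OF \<open>finite I\<close>]) (use I_le x q in auto)
      then show False using x unfolding b c_def by simp
    qed
    then show "x \<in> active_face y" using x unfolding active_face_def I_def unit_ball_def by auto
  qed
  moreover have "y \<in> active_face y" using y by (simp add: in_active_face_self)
  moreover have "0 \<in> unit_ball N" "0 \<notin> active_face y"
    using active_face_on_sphere[OF y] seminorm_0[OF seminorm] by (force simp: unit_ball_def)+
  ultimately show ?thesis
    unfolding proper_face_def poly_face_def using supporting by blast
qed

lemma active_face_image:
  assumes y: "N y = 1" and A: "\<forall>x. N (A *v x) \<le> N x" and Ay: "N (A *v y) = 1"
    and z: "z \<in> active_face y"
  shows "A *v z \<in> active_face (A *v y)"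
proof -
  have "\<forall>p\<in>C. fst p \<bullet> y = snd p \<longrightarrow> fst p \<bullet> (y - z) \<le> 0"
    using z unfolding active_face_def by (auto simp: inner_diff_right)
  moreover have "\<forall>p\<in>C. fst p \<bullet> y \<le> snd p" using le_1_iff[of y] y by simp
  ultimately obtain e where e: "e > 0" "\<forall>p\<in>C. fst p \<bullet> (y + e *\<^sub>R (y - z)) \<le> snd p"
    using halfspaces_small_step[OF finite_C] by blast
  define w where "w = y + e *\<^sub>R (y - z)"
  have Aw: "N (A *v w) \<le> 1" using A e le_1_iff order_trans unfolding w_def by blast
  have Az: "N (A *v z) \<le> 1" using A z order_trans unfolding active_face_def by blast
  have y_comb: "(1 + e) *\<^sub>R y = w + e *\<^sub>R z" unfolding w_def by (simp add: algebra_simps)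
  have "fst p \<bullet> (A *v z) = snd p" if p: "p \<in> C" "fst p \<bullet> (A *v y) = snd p" for p
  proof -
    have "(1 + e) * snd p = fst p \<bullet> (A *v ((1 + e) *\<^sub>R y))"
      using p by (simp add: matrix_vector_mult_scaleR)
    also have "\<dots> = fst p \<bullet> (A *v w) + e * (fst p \<bullet> (A *v z))"
      unfolding y_comb by (simp add: matrix_vector_right_distrib matrix_vector_mult_scaleR inner_add_right)
    finally have comb: "(1 + e) * snd p = fst p \<bullet> (A *v w) + e * (fst p \<bullet> (A *v z))" .
    have "fst p \<bullet> (A *v w) \<le> snd p" "fst p \<bullet> (A *v z) \<le> snd p" using le_1_iff Aw Az p by blast+
    moreover from this comb have "e * snd p \<le> e * (fst p \<bullet> (A *v z))"
      by (simp add: algebra_simps)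
    ultimately show ?thesis using e(1) by simp
  qed
  then show ?thesis using Az unfolding active_face_def by blast
qed

definition double_active_face :: "real^'n \<Rightarrow> (real^'n) set" where
  "double_active_face y = active_face y \<union> uminus ` active_face y"

lemma double_active_face_in_double_faces:
  "N y = 1 \<Longrightarrow> double_active_face y \<in> double_faces (unit_ball N)"
  unfolding double_active_face_def double_faces_def using proper_face_active_face by blast

lemma double_active_face_on_sphere:
  assumes "N y = 1"
  shows "double_active_face y \<noteq> {}" "\<forall>x\<in>double_active_face y. N x = 1"
  using assms in_active_face_self[of y] active_face_on_sphere seminorm_minus[OF seminorm]
  unfolding double_active_face_def by auto

lemma double_active_face_image:
  assumes "N y = 1" "\<forall>x. N (A *v x) \<le> N x" "N (A *v y) = 1"
  shows "(\<lambda>x. A *v x) ` double_active_face y \<subseteq> double_active_face (A *v y)"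
  using active_face_image[OF assms]
  unfolding double_active_face_def by (auto simp: matrix_vector_mult_uminus)

end

definition closed_walk ::
  "(real^'n^'n) set \<Rightarrow> (real^'n) set set \<Rightarrow> nat \<Rightarrow> (nat \<Rightarrow> (real^'n) set) \<Rightarrow> (nat \<Rightarrow> real^'n^'n) \<Rightarrow> bool"
  where "closed_walk \<Sigma> V m g A \<longleftrightarrow> 1 \<le> m \<and>
    (\<forall>k<m. A k \<in> \<Sigma> \<and> g k \<in> V \<and> (\<lambda>x. A k *v x) ` g k \<subseteq> g (Suc k)) \<and> g m \<subseteq> g 0"

lemma closed_walk_subwalk:
  assumes "closed_walk \<Sigma> V m g A" "j < i" "i < m" "g i \<subseteq> g j"
  shows "closed_walk \<Sigma> V (i - j) (\<lambda>k. g (j + k)) (\<lambda>k. A (j + k))"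
  using assms unfolding closed_walk_def by auto

lemma closed_walk_shortcut:
  assumes walk: "closed_walk \<Sigma> V m g A" and ij: "i < j" "j < m" "g i \<subseteq> g j"
  shows "closed_walk \<Sigma> V (m - (j - i))
    (\<lambda>k. if k \<le> i then g k else g (k + (j - i))) (\<lambda>k. if k < i then A k else A (k + (j - i)))"
    (is "closed_walk \<Sigma> V ?m ?g ?A")
proof -
  have step: "A k \<in> \<Sigma> \<and> g k \<in> V \<and> (\<lambda>x. A k *v x) ` g k \<subseteq> g (Suc k)" if "k < m" for k
    using walk that unfolding closed_walk_def by blast
  have "(\<lambda>x. ?A k *v x) ` ?g k \<subseteq> ?g (Suc k)" if k: "k < ?m" for k
  proof (cases "k = i")
    case True
    have "(\<lambda>x. A j *v x) ` g i \<subseteq> (\<lambda>x. A j *v x) ` g j" using ij by blast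
    also have "\<dots> \<subseteq> g (Suc j)" using step[of j] ij by blast
    finally show ?thesis using True ij by simp
  next
    case False
    then show ?thesis using step[of k] step[of "k + (j - i)"] k by auto
  qed
  moreover have "?A k \<in> \<Sigma> \<and> ?g k \<in> V" if "k < ?m" for k
    using step[of k] step[of "k + (j - i)"] that ij by auto
  moreover have "?g ?m \<subseteq> ?g 0" using walk ij unfolding closed_walk_def by auto
  ultimately show ?thesis using ij unfolding closed_walk_def by auto
qed

lemma closed_walk_antichain:
  assumes "closed_walk \<Sigma> V m g A"
  obtains m' g' A' where "closed_walk \<Sigma> V m' g' A'"
    "\<forall>i<m'. \<forall>j<m'. i \<noteq> j \<longrightarrow> \<not> g' i \<subseteq> g' j"
  using assms
proof (induction m arbitrary: g A rule: less_induct)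
  case (less m)
  show ?case
  proof (cases "\<forall>i<m. \<forall>j<m. i \<noteq> j \<longrightarrow> \<not> g i \<subseteq> g j")
    case True then show ?thesis using less.prems by blast
  next
    case False
    then obtain i j where ij: "i < m" "j < m" "i \<noteq> j" "g i \<subseteq> g j" by blast
    show ?thesis
    proof (cases "j < i")
      case True
      then show ?thesis
        using less.IH[of "i - j"] less.prems closed_walk_subwalk[OF less.prems(2) True ij(1,4)] ij
        by auto
    next
      case False
      then have "i < j" using ij by simp
      then show ?thesis
        using less.IH[of "m - (j - i)"] less.prems closed_walk_shortcut[OF less.prems(2) _ ij(2,4)] ij
        by auto
    qed
  qed
qed

lemma lprod_Suc_mult_vec: "lprod M (Suc t) *v x = M t *v (lprod M t *v x)"
  by (simp add: matrix_vector_mul_assoc)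

lemma closed_walk_orbit:
  assumes walk: "closed_walk \<Sigma> V m g A" and x: "x \<in> g 0"
  shows "lprod (\<lambda>i. A (i mod m)) t *v x \<in> g (t mod m)"
proof (induction t)
  case 0 then show ?case using x by simp
next
  case (Suc t)
  have "1 \<le> m" "g m \<subseteq> g 0"
    and step: "(\<lambda>x. A (t mod m) *v x) ` g (t mod m) \<subseteq> g (Suc (t mod m))"
    using walk unfolding closed_walk_def by auto
  have "lprod (\<lambda>i. A (i mod m)) (Suc t) *v x \<in> g (Suc (t mod m))"
    unfolding lprod_Suc_mult_vec using Suc step by blast
  then show ?case using \<open>g m \<subseteq> g 0\<close> by (auto simp: mod_Suc)
qed

lemma closed_walk_periodic_noncontracting:
  assumes walk: "closed_walk \<Sigma> V m g A" and N: "is_seminorm N"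
    and V: "\<forall>G\<in>V. G \<noteq> {} \<and> (\<forall>x\<in>G. N x = 1)"
  shows "\<not> contracts (\<lambda>i. A (i mod m)) N"
proof
  assume "contracts (\<lambda>i. A (i mod m)) N"
  then obtain t where
    "(\<lambda>x. lprod (\<lambda>i. A (i mod m)) t *v x) ` unit_ball N \<subseteq> interior (unit_ball N)"
    unfolding contracts_def by blast
  then have into: "N (lprod (\<lambda>i. A (i mod m)) t *v x) < 1" if "N x \<le> 1" for x
    using that interior_unit_ball[OF N] by (auto simp: unit_ball_def)
  have "m \<ge> 1" and gV: "\<forall>k<m. g k \<in> V" using walk unfolding closed_walk_def by auto
  then obtain x where x: "x \<in> g 0" using V by fastforce
  have "N x = 1" using V gV x \<open>m \<ge> 1\<close> by auto
  moreover have "N (lprod (\<lambda>i. A (i mod m)) t *v x) = 1"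
    using closed_walk_orbit[OF walk x, of t] V gV \<open>m \<ge> 1\<close> by auto
  ultimately show False using into[of x] by simp
qed

lemma lprod_nonincreasing:
  assumes "nonincreasing_for N \<Sigma>" "\<forall>i. M i \<in> \<Sigma>" "s \<le> t"
  shows "N (lprod M t *v x) \<le> N (lprod M s *v x)"
  using assms(3)
proof (induction t rule: dec_induct)
  case (step t)
  have "N (lprod M (Suc t) *v x) \<le> N (lprod M t *v x)"
    unfolding lprod_Suc_mult_vec using assms(1,2) unfolding nonincreasing_for_def by blast
  with step.IH show ?case by linarith
qed simp

lemma noncontracting_orbit_on_sphere:
  assumes N: "is_seminorm N" and "nonincreasing_for N \<Sigma>" "\<forall>i. M i \<in> \<Sigma>"
    and "\<not> contracts M N" "1 \<le> T"
  obtains x where "\<forall>t\<le>T. N (lprod M t *v x) = 1"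
proof -
  obtain x where x: "N x \<le> 1" "\<not> N (lprod M T *v x) < 1"
    using assms(4,5) interior_unit_ball[OF N] unfolding contracts_def unit_ball_def by auto
  have "N (lprod M t *v x) = 1" if "t \<le> T" for t
    using lprod_nonincreasing[OF assms(2,3) that, of x] lprod_nonincreasing[OF assms(2,3), of 0 t x] x
    by simp
  then show ?thesis using that by blast
qed

lemma repeated_value:
  assumes "finite V" "\<forall>t\<le>card V. d t \<in> V"
  obtains a b where "a < b" "b \<le> card V" "d a = d b"
proof -
  have "card (d ` {..card V}) \<le> card V"
    using assms by (intro card_mono) auto
  then have "\<not> inj_on d {..card V}" by (intro pigeonhole) simp
  then obtain i j where "i \<le> card V" "j \<le> card V" "i \<noteq> j" "d i = d j"
    unfolding inj_on_def by auto
  then show ?thesis using that[of i j] that[of j i] by (cases "i < j") auto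
qed

lemma face_of_poly_face:
  assumes "polyhedron Q" "poly_face Q F"
  shows "F face_of Q"
  using assms(2) polyhedron_imp_convex[OF assms(1)]
  unfolding poly_face_def by (auto intro: face_of_refl face_of_Int_supporting_hyperplane_le)

lemma finite_double_face_lattice:
  assumes "polyhedron Q"
  shows "finite (double_face_lattice Q)"
proof -
  have "double_faces Q \<subseteq> (\<lambda>F. F \<union> uminus ` F) ` {F. F face_of Q}"
    unfolding double_faces_def proper_face_def using face_of_poly_face[OF assms] by blast
  then have "finite (double_faces Q)"
    using finite_polyhedron_faces[OF assms] by (meson finite_imageI finite_subset)
  then show ?thesis unfolding double_face_lattice_def by simp
qed

lemma card_antichain_le_width:
  assumes "polyhedron Q" "A \<subseteq> double_face_lattice Q" "antichain_sets A"
  shows "card A \<le> width Q"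
proof -
  have fin: "finite (double_face_lattice Q)" by (rule finite_double_face_lattice[OF assms(1)])
  have "{card A | A. A \<subseteq> double_face_lattice Q \<and> finite A \<and> antichain_sets A}
      \<subseteq> card ` Pow (double_face_lattice Q)"
    by blast
  then have "finite {card A | A. A \<subseteq> double_face_lattice Q \<and> finite A \<and> antichain_sets A}"
    using fin finite_subset by blast
  then show ?thesis
    unfolding width_def using assms fin finite_subset by (intro Max_ge) blast+
qed

lemma closed_walk_length_le_width:
  assumes "polyhedron Q" "closed_walk \<Sigma> V m g A" "V \<subseteq> double_faces Q"
    and antichain: "\<forall>i<m. \<forall>j<m. i \<noteq> j \<longrightarrow> \<not> g i \<subseteq> g j"
  shows "m \<le> width Q"
proof -
  have "g ` {..<m} \<subseteq> double_face_lattice Q"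
    using assms(2,3) unfolding closed_walk_def double_face_lattice_def by auto
  moreover have "antichain_sets (g ` {..<m})"
    using antichain unfolding antichain_sets_def by blast
  ultimately have "card (g ` {..<m}) \<le> width Q"
    by (rule card_antichain_le_width[OF assms(1)])
  moreover have "inj_on g {..<m}"
    using antichain unfolding inj_on_def by blast
  ultimately show ?thesis by (simp add: card_image)
qed

context seminorm_halfspaces
begin

lemma noncontracting_imp_closed_walk:
  assumes "nonincreasing_for N \<Sigma>" "\<forall>i. M i \<in> \<Sigma>" "\<not> contracts M N"
  obtains m g A where "closed_walk \<Sigma> (double_active_face ` {y. N y = 1}) m g A"
proof -
  let ?V = "double_active_face ` {y. N y = 1}"
  have "?V \<subseteq> double_faces (unit_ball N)"
    using double_active_face_in_double_faces by blast
  then have "finite ?V"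
    using finite_double_face_lattice[OF polyhedron_unit_ball] finite_subset
    unfolding double_face_lattice_def by blast
  obtain x where x: "\<forall>t\<le>Suc (card ?V). N (lprod M t *v x) = 1"
    using noncontracting_orbit_on_sphere[OF seminorm assms, where T = "Suc (card ?V)"] by auto
  define d where "d t = double_active_face (lprod M t *v x)" for t
  have dV: "\<forall>t\<le>card ?V. d t \<in> ?V" using x unfolding d_def by auto
  then obtain a b where ab: "a < b" "b \<le> card ?V" "d a = d b"
    using repeated_value[OF \<open>finite ?V\<close>] by blast
  have step: "(\<lambda>z. M t *v z) ` d t \<subseteq> d (Suc t)" if "t < b" for t
  proof -
    have "N (lprod M t *v x) = 1" "N (M t *v (lprod M t *v x)) = 1"
      using x[rule_format, of t] x[rule_format, of "Suc t"] that ab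
      unfolding lprod_Suc_mult_vec by auto
    moreover have "\<forall>z. N (M t *v z) \<le> N z"
      using assms(1,2) unfolding nonincreasing_for_def by blast
    ultimately show ?thesis
      using double_active_face_image unfolding d_def lprod_Suc_mult_vec by blast
  qed
  have "closed_walk \<Sigma> ?V (b - a) (\<lambda>k. d (a + k)) (\<lambda>k. M (a + k))"
    unfolding closed_walk_def using ab dV step assms(2) by auto
  then show ?thesis using that by blast
qed

end

theorem theorem1:
  fixes \<Sigma> :: "(real^'n^'n) set" and N :: "real^'n \<Rightarrow> real"
    and M :: "nat \<Rightarrow> real^'n^'n"
  assumes "polyhedral_seminorm N"
    and "nonincreasing_for N \<Sigma>"
    and "\<forall>i. M i \<in> \<Sigma>"
    and "\<not> contracts M N"
  shows "\<exists>M' p. (\<forall>i. M' i \<in> \<Sigma>) \<and> \<not> contracts M' N \<and> 1 \<le> p \<and>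
           periodic_with M' p \<and> p \<le> width (unit_ball N)"
proof -
  have N: "is_seminorm N" and ph: "polyhedron (unit_ball N)"
    using assms(1) unfolding polyhedral_seminorm_def by auto
  from ph obtain C where "finite C" "unit_ball N = {x. \<forall>p\<in>C. fst p \<bullet> x \<le> snd p}"
    by (rule polyhedron_finite_halfspaces)
  then interpret seminorm_halfspaces N C
    using N by unfold_locales (auto simp: unit_ball_def set_eq_iff)
  let ?V = "double_active_face ` {y. N y = 1}"
  obtain m g A where walk: "closed_walk \<Sigma> ?V m g A"
    "\<forall>i<m. \<forall>j<m. i \<noteq> j \<longrightarrow> \<not> g i \<subseteq> g j"
    using noncontracting_imp_closed_walk[OF assms(2-4)] closed_walk_antichain by metis
  have "\<forall>G\<in>?V. G \<noteq> {} \<and> (\<forall>x\<in>G. N x = 1)"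
    using double_active_face_on_sphere by blast
  then have "\<not> contracts (\<lambda>i. A (i mod m)) N"
    using closed_walk_periodic_noncontracting[OF walk(1) N] by blast
  moreover have "m \<le> width (unit_ball N)"
    using closed_walk_length_le_width[OF polyhedron_unit_ball walk(1) _ walk(2)]
      double_active_face_in_double_faces by blast
  moreover have "1 \<le> m" "\<forall>i. A (i mod m) \<in> \<Sigma>"
    using walk(1) unfolding closed_walk_def by auto
  ultimately show ?thesis
    by (intro exI[of _ "\<lambda>i. A (i mod m)"] exI[of _ m]) (simp add: periodic_with_def)
qed
end
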